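(* Let $\Gamma$ be a finite connected cubic graph, let $\alpha$ be a vertex of $\Gamma$, let $G$ be a vertex-transitive subgroup of $\mathrm{Aut}(\Gamma)$ and let $N$ be a normal subgroup of $G$ acting semiregularly on $V\Gamma$. Suppose that the vertex stabilizer $G_\alpha$ is a non-identity $2$-group and that the normal quotient $\Gamma/N$ is a cycle of length $r\ge 3$. Let $K$ be the kernel of the action of $G$ on the set of $N$-orbits on $V\Gamma$. Then either (1) $|G_\alpha|=2$ and $K_\alpha=1$, or (2) $r$ is even and $G_\alpha=K_\alpha$ is an elementary abelian $2$-group of order at most $2^{r/2}$.
   Context: For $N\le\mathrm{Aut}(\Gamma)$, the normal quotient $\Gamma/N$ is the graph whose vertices are the $N$-orbits on $V\Gamma$, two distinct orbits being adjacent if some edge of $\Gamma$ joins a vertex of one to a vertex of the other. A cycle is a connected graph in which every vertex has valency $2$. $G_\alpha$ and $K_\alpha$ denote the stabilizers of $\alpha$ in $G$ and $K$. *)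

theory Defs
  imports "HOL-Algebra.Algebra"
begin

definition simple_graph :: "'a set \<Rightarrow> ('a \<Rightarrow> 'a \<Rightarrow> bool) \<Rightarrow> bool" where
  "simple_graph V E \<longleftrightarrow> finite V \<and> (\<forall>u v. E u v \<longrightarrow> u \<in> V \<and> v \<in> V)
     \<and> (\<forall>u v. E u v \<longrightarrow> E v u) \<and> (\<forall>v. \<not> E v v)"

definition neighbours :: "'a set \<Rightarrow> ('a \<Rightarrow> 'a \<Rightarrow> bool) \<Rightarrow> 'a \<Rightarrow> 'a set" where
  "neighbours V E v = {w \<in> V. E v w}"

definition graph_connected :: "'a set \<Rightarrow> ('a \<Rightarrow> 'a \<Rightarrow> bool) \<Rightarrow> bool" where
  "graph_connected V E \<longleftrightarrow> V \<noteq> {} \<and>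
     (\<forall>u\<in>V. \<forall>v\<in>V. (\<lambda>x y. x \<in> V \<and> y \<in> V \<and> E x y)\<^sup>*\<^sup>* u v)"

definition cubic :: "'a set \<Rightarrow> ('a \<Rightarrow> 'a \<Rightarrow> bool) \<Rightarrow> bool" where
  "cubic V E \<longleftrightarrow> (\<forall>v\<in>V. card (neighbours V E v) = 3)"

definition is_cycle :: "'a set \<Rightarrow> ('a \<Rightarrow> 'a \<Rightarrow> bool) \<Rightarrow> bool" where
  "is_cycle V E \<longleftrightarrow> graph_connected V E \<and> (\<forall>v\<in>V. card (neighbours V E v) = 2)"

definition Aut :: "'a set \<Rightarrow> ('a \<Rightarrow> 'a \<Rightarrow> bool) \<Rightarrow> ('a \<Rightarrow> 'a) set" where
  "Aut V E = {g \<in> Bij V. \<forall>u\<in>V. \<forall>v\<in>V. E u v \<longleftrightarrow> E (g u) (g v)}"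

definition vertex_transitive :: "'a set \<Rightarrow> ('a \<Rightarrow> 'a) set \<Rightarrow> bool" where
  "vertex_transitive V G \<longleftrightarrow> (\<forall>u\<in>V. \<forall>v\<in>V. \<exists>g\<in>G. g u = v)"

definition semiregular :: "'a set \<Rightarrow> ('a \<Rightarrow> 'a) set \<Rightarrow> bool" where
  "semiregular V N \<longleftrightarrow> (\<forall>g\<in>N. \<forall>v\<in>V. g v = v \<longrightarrow> g = \<one>\<^bsub>BijGroup V\<^esub>)"

definition stab :: "('a \<Rightarrow> 'a) set \<Rightarrow> 'a \<Rightarrow> ('a \<Rightarrow> 'a) set" where
  "stab G a = {g \<in> G. g a = a}"

definition orbit_of :: "('a \<Rightarrow> 'a) set \<Rightarrow> 'a \<Rightarrow> 'a set" where
  "orbit_of N v = {g v | g. g \<in> N}"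

definition orbits :: "'a set \<Rightarrow> ('a \<Rightarrow> 'a) set \<Rightarrow> 'a set set" where
  "orbits V N = orbit_of N ` V"

definition quot_adj :: "('a \<Rightarrow> 'a \<Rightarrow> bool) \<Rightarrow> 'a set \<Rightarrow> 'a set \<Rightarrow> bool" where
  "quot_adj E B C \<longleftrightarrow> B \<noteq> C \<and> (\<exists>u\<in>B. \<exists>v\<in>C. E u v)"

definition orbit_kernel :: "'a set \<Rightarrow> ('a \<Rightarrow> 'a) set \<Rightarrow> ('a \<Rightarrow> 'a) set \<Rightarrow> ('a \<Rightarrow> 'a) set" where
  "orbit_kernel V G N = {g \<in> G. \<forall>B\<in>orbits V N. g ` B = B}"

definition elementary_abelian_2group :: "('a, 'b) monoid_scheme \<Rightarrow> bool" where
  "elementary_abelian_2group H \<longleftrightarrow> comm_group H \<and> (\<forall>x\<in>carrier H. x \<otimes>\<^bsub>H\<^esub> x = \<one>\<^bsub>H\<^esub>)"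

end

theory Submission
  imports Defs
begin

text \<open>
  The three neighbours of a vertex u lie in its own N-orbit and in the two orbits adjacent
  to it in the cycle \<open>\<Gamma>/N\<close>, with at least one in each adjacent orbit. By vertex-transitivity
  the number of neighbours of u inside its own orbit is the same for all u, hence it is 0 or 1.

  If it is 1, every vertex has exactly one neighbour in each of the three orbits, so an
  element of G is determined, by propagation along edges, by the image of \<open>\<alpha>\<close> and its
  action on the two orbits adjacent to that of \<open>\<alpha>\<close>. Thus \<open>G\<^sub>\<alpha>\<close> acts faithfully on a
  set of size 2, and \<open>K\<^sub>\<alpha>\<close>, which fixes all orbits, is trivial.

  If it is 0, every vertex of an orbit B has two neighbours in one adjacent orbit D(B) and
  one in the other; double counting the edges between B and D(B) shows that D is a
  fixed-point-free involution of \<open>\<Gamma>/N\<close>, so r is even. Comparing these neighbour counts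
  shows that \<open>G\<^sub>\<alpha>\<close> fixes every orbit, i.e. \<open>G\<^sub>\<alpha> = K\<^sub>\<alpha>\<close>. An element k of K agrees at each
  vertex with an element of N; on an edge uv it either agrees with one element of N at both
  ends, or it swaps the two neighbours of u in D(orb u). The first always happens on single
  edges, and on double edges it depends only on the pair {B, D(B)}. Since k is determined by
  \<open>k \<alpha>\<close> and this pattern, \<open>|K\<^sub>\<alpha>| \<le> 2\<^bsup>r/2\<^esup>\<close>; the same swapping shows \<open>k\<^sup>2 = 1\<close> for \<open>k \<in> K\<^sub>\<alpha>\<close>.
\<close>

lemma card_le_2_eq_other:
  assumes "finite S" "card S \<le> 2" "{a, b, c} \<subseteq> S" "a \<noteq> c" "b \<noteq> c"
  shows "a = b"
proof (rule ccontr)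
  assume "a \<noteq> b"
  then have "card {a, b, c} = 3" using assms(4,5) by simp
  moreover have "card {a, b, c} \<le> card S" using assms(1,3) by (rule card_mono)
  ultimately show False using assms(2) by simp
qed

lemma sum_card_relation_swap:
  assumes "finite A" "finite B"
  shows "(\<Sum>x\<in>A. card {y \<in> B. R x y}) = (\<Sum>y\<in>B. card {x \<in> A. R x y})"
proof -
  have "(\<Sum>x\<in>A. card {y \<in> B. R x y}) = (\<Sum>x\<in>A. \<Sum>y\<in>B. if R x y then 1 else 0)"
    using assms(2) by (simp add: sum.inter_filter[symmetric])
  also have "\<dots> = (\<Sum>y\<in>B. \<Sum>x\<in>A. if R x y then 1 else 0)"
    by (rule sum.swap)
  also have "\<dots> = (\<Sum>y\<in>B. card {x \<in> A. R x y})"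
    using assms(1) by (simp add: sum.inter_filter[symmetric])
  finally show ?thesis .
qed

lemma fixpoint_free_involution_transversal:
  assumes "finite A" "\<And>x. x \<in> A \<Longrightarrow> f x \<in> A \<and> f x \<noteq> x \<and> f (f x) = x"
  obtains T where "T \<subseteq> A" "card A = 2 * card T" "\<forall>x\<in>A. x \<in> T \<longleftrightarrow> f x \<notin> T"
  using assms
proof (induction A arbitrary: thesis rule: finite_psubset_induct)
  case (psubset A)
  show ?case
  proof (cases "A = {}")
    case True
    then show ?thesis using psubset.prems(1)[of "{}"] by simp
  next
    case False
    then obtain x where x: "x \<in> A" by blast
    have fx: "f x \<in> A" "f x \<noteq> x" "f (f x) = x" using psubset.prems(2)[OF x] by auto
    define A' where "A' = A - {x, f x}"
    have A'_closed: "f y \<in> A' \<and> f y \<noteq> y \<and> f (f y) = y" if y: "y \<in> A'" for y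
    proof -
      have "f y \<in> A" "f y \<noteq> y" "f (f y) = y" using y psubset.prems(2) unfolding A'_def by auto
      moreover have "f y \<noteq> x" "f y \<noteq> f x" using y fx(3) \<open>f (f y) = y\<close> unfolding A'_def by auto
      ultimately show ?thesis unfolding A'_def by blast
    qed
    obtain T' where T': "T' \<subseteq> A'" "card A' = 2 * card T'" "\<forall>y\<in>A'. y \<in> T' \<longleftrightarrow> f y \<notin> T'"
      using psubset.IH[of A'] A'_closed x unfolding A'_def by blast
    have "card {x, f x} \<le> card A"
      using psubset.hyps x fx(1) by (intro card_mono) auto
    then have "card A = card A' + 2"
      using psubset.hyps x fx(1,2) unfolding A'_def by (simp add: card_Diff_subset)
    moreover have "x \<notin> T'" "finite T'"
      using T'(1) finite_subset[OF T'(1)] psubset.hyps unfolding A'_def by auto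
    then have "card (insert x T') = card T' + 1" by simp
    moreover have "y \<in> insert x T' \<longleftrightarrow> f y \<notin> insert x T'" if "y \<in> A" for y
    proof (cases "y \<in> A'")
      case True
      then show ?thesis using T'(3) A'_closed x T'(1) unfolding A'_def by blast
    next
      case False
      then have "y = x \<or> y = f x" using that unfolding A'_def by blast
      then show ?thesis using T'(1) fx(2,3) unfolding A'_def by auto
    qed
    ultimately show ?thesis
      using psubset.prems(1)[of "insert x T'"] T' x unfolding A'_def by auto
  qed
qed

lemma elementary_abelian_2groupI:
  assumes "group H" and sq: "\<And>x. x \<in> carrier H \<Longrightarrow> x \<otimes>\<^bsub>H\<^esub> x = \<one>\<^bsub>H\<^esub>"
  shows "elementary_abelian_2group H"
proof -
  interpret group H by (fact assms(1))
  have inv_self: "inv\<^bsub>H\<^esub> x = x" if "x \<in> carrier H" for x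
    using inv_equality[OF sq[OF that] that that] .
  have "x \<otimes>\<^bsub>H\<^esub> y = y \<otimes>\<^bsub>H\<^esub> x" if "x \<in> carrier H" "y \<in> carrier H" for x y
    using inv_mult_group[OF that] inv_self that by simp
  then have "comm_group H" by (intro group_comm_groupI) auto
  then show ?thesis using sq unfolding elementary_abelian_2group_def by blast
qed

context
  fixes V :: "'a set" and H :: "('a \<Rightarrow> 'a) set"
  assumes H: "subgroup H (BijGroup V)"
begin

lemma perm_Bij: "h \<in> H \<Longrightarrow> h \<in> Bij V"
  using subgroup.subset[OF H] by (auto simp: BijGroup_def)

lemma perm_bij_betw: "h \<in> H \<Longrightarrow> bij_betw h V V"
  using perm_Bij by (simp add: Bij_def)

lemma perm_eqI: "a \<in> H \<Longrightarrow> b \<in> H \<Longrightarrow> (\<And>x. x \<in> V \<Longrightarrow> a x = b x) \<Longrightarrow> a = b"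
  using perm_Bij by (metis Bij_imp_extensional extensionalityI)

lemma perm_id_closed: "(\<lambda>x\<in>V. x) \<in> H"
  using subgroup.one_closed[OF H] by (simp add: BijGroup_def)

lemma perm_compose_closed: "a \<in> H \<Longrightarrow> b \<in> H \<Longrightarrow> compose V a b \<in> H"
  using subgroup.m_closed[OF H] perm_Bij by (fastforce simp: BijGroup_def)

lemma perm_inv_closed: "a \<in> H \<Longrightarrow> restrict (inv_into V a) V \<in> H"
  using subgroup.m_inv_closed[OF H] perm_Bij by (fastforce simp: inv_BijGroup)

lemma perm_apply_closed: "a \<in> H \<Longrightarrow> x \<in> V \<Longrightarrow> a x \<in> V"
  by (rule bij_betw_apply[OF perm_bij_betw])

lemma perm_inv_apply: "a \<in> H \<Longrightarrow> x \<in> V \<Longrightarrow> restrict (inv_into V a) V (a x) = x"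
  by (simp add: perm_apply_closed bij_betw_inv_into_left[OF perm_bij_betw])

lemma perm_apply_inv: "a \<in> H \<Longrightarrow> x \<in> V \<Longrightarrow> a (restrict (inv_into V a) V x) = x"
  by (simp add: bij_betw_inv_into_right[OF perm_bij_betw])

lemma orbit_of_self: "u \<in> V \<Longrightarrow> u \<in> orbit_of H u"
  using perm_id_closed unfolding orbit_of_def by (metis (mono_tags, lifting) mem_Collect_eq restrict_apply')

lemma orbit_of_subset: "u \<in> V \<Longrightarrow> orbit_of H u \<subseteq> V"
  using perm_apply_closed unfolding orbit_of_def by blast

lemma orbit_of_apply:
  assumes n: "n \<in> H" and u: "u \<in> V"
  shows "orbit_of H (n u) = orbit_of H u"
proof
  have "m (n u) = compose V m n u" if "m \<in> H" for m
    using u by (simp add: compose_def)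
  then show "orbit_of H (n u) \<subseteq> orbit_of H u"
    using n perm_compose_closed unfolding orbit_of_def by blast
  have "m u = compose V m (restrict (inv_into V n) V) (n u)" if "m \<in> H" for m
    using n u perm_inv_apply perm_apply_closed by (simp add: compose_def)
  then show "orbit_of H u \<subseteq> orbit_of H (n u)"
    using n perm_compose_closed perm_inv_closed unfolding orbit_of_def by blast
qed

lemma orbit_of_eq: "u \<in> V \<Longrightarrow> v \<in> orbit_of H u \<Longrightarrow> orbit_of H v = orbit_of H u"
  by (auto simp: orbit_of_def[of H u] orbit_of_apply)

lemma orbits_memD:
  assumes "B \<in> orbits V H" "y \<in> B"
  shows "y \<in> V" "B = orbit_of H y"
proof -
  obtain u where u: "u \<in> V" "B = orbit_of H u" using assms(1) unfolding orbits_def by blast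
  then show "y \<in> V" using assms(2) orbit_of_subset by blast
  show "B = orbit_of H y" using u assms(2) orbit_of_eq by simp
qed

lemma orbits_subset: "B \<in> orbits V H \<Longrightarrow> B \<subseteq> V"
  using orbits_memD(1) by blast

lemma orbits_disjoint: "B \<in> orbits V H \<Longrightarrow> C \<in> orbits V H \<Longrightarrow> B \<noteq> C \<Longrightarrow> B \<inter> C = {}"
  by (metis disjoint_iff orbits_memD(2))

lemma semiregular_eqI:
  assumes "semiregular V H" "a \<in> H" "b \<in> H" "u \<in> V" "a u = b u"
  shows "a = b"
proof -
  let ?c = "compose V (restrict (inv_into V b) V) a"
  have "?c \<in> H" using assms perm_compose_closed perm_inv_closed by blast
  moreover have "?c u = u" by (simp only: compose_eq[OF assms(4)] assms(5) perm_inv_apply[OF assms(3,4)])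
  ultimately have "?c = \<one>\<^bsub>BijGroup V\<^esub>" using assms(1,4) unfolding semiregular_def by blast
  then have "restrict (inv_into V b) V (a x) = x" if "x \<in> V" for x
    using that by (metis compose_eq BijGroup_def monoid.select_convs(2) restrict_apply')
  then have "b x = a x" if "x \<in> V" for x
    using that assms(2) perm_apply_inv[OF assms(3) perm_apply_closed] by metis
  then show ?thesis
    using assms(2,3) perm_eqI by metis
qed

end

lemma stab_subgroup:
  assumes G: "subgroup G (BijGroup V)" and a: "a \<in> V"
  shows "subgroup (stab G a) (BijGroup V)"
proof (rule group.subgroupI[OF group_BijGroup])
  show "stab G a \<subseteq> carrier (BijGroup V)"
    using subgroup.subset[OF G] unfolding stab_def by auto
  show "stab G a \<noteq> {}"
    using perm_id_closed[OF G] a unfolding stab_def by force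
next
  fix g assume "g \<in> stab G a"
  then have g: "g \<in> G" "g a = a" unfolding stab_def by auto
  have "restrict (inv_into V g) V a = a" using perm_inv_apply[OF G g(1) a] g(2) by simp
  then show "inv\<^bsub>BijGroup V\<^esub> g \<in> stab G a"
    using perm_inv_closed[OF G g(1)] inv_BijGroup[OF perm_Bij[OF G g(1)]] unfolding stab_def by simp
next
  fix g h assume "g \<in> stab G a" "h \<in> stab G a"
  then have gh: "g \<in> G" "h \<in> G" "g a = a" "h a = a" unfolding stab_def by auto
  then have "g \<otimes>\<^bsub>BijGroup V\<^esub> h = compose V g h"
    using perm_Bij[OF G] by (simp add: BijGroup_def)
  then show "g \<otimes>\<^bsub>BijGroup V\<^esub> h \<in> stab G a"
    using perm_compose_closed[OF G gh(1,2)] gh(3,4) a unfolding stab_def by (simp add: compose_eq)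
qed

context
  fixes V :: "'a set" and G N :: "('a \<Rightarrow> 'a) set"
  assumes G: "subgroup G (BijGroup V)" and N: "normal N (BijGroup V \<lparr>carrier := G\<rparr>)"
begin

lemma normal_subgroup_BijGroup: "subgroup N (BijGroup V)"
  using group.incl_subgroup[OF group_BijGroup G normal_imp_subgroup[OF N]] .

lemma normal_subset: "N \<subseteq> G"
  using subgroup.subset[OF normal_imp_subgroup[OF N]] by simp

lemma normal_commute:
  assumes g: "g \<in> G" and n: "n \<in> N"
  obtains n' where "n' \<in> N" "\<And>x. x \<in> V \<Longrightarrow> g (n x) = n' (g x)"
proof -
  let ?G = "BijGroup V \<lparr>carrier := G\<rparr>" and ?g' = "restrict (inv_into V g) V"
  have "inv\<^bsub>?G\<^esub> g = ?g'"
    using group.m_inv_consistent[OF group_BijGroup G g] inv_BijGroup[OF perm_Bij[OF G g]] by simp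
  moreover have "g \<otimes>\<^bsub>?G\<^esub> n \<otimes>\<^bsub>?G\<^esub> inv\<^bsub>?G\<^esub> g \<in> N"
    using normal.inv_op_closed2[OF N] g n by simp
  moreover have "n \<in> Bij V" "g \<in> Bij V" "?g' \<in> Bij V"
    using n g normal_subset perm_Bij[OF G] restrict_inv_into_Bij by auto
  ultimately have conj: "compose V (compose V g n) ?g' \<in> N"
    by (simp add: BijGroup_def compose_Bij)
  have "g (n x) = compose V (compose V g n) ?g' (g x)" if "x \<in> V" for x
    using that perm_apply_closed[OF G g] perm_inv_apply[OF G g] by (simp add: compose_eq)
  then show ?thesis using conj that by blast
qed

lemma normal_orbit_image:
  assumes g: "g \<in> G" and u: "u \<in> V"
  shows "g ` orbit_of N u = orbit_of N (g u)"
proof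
  show "g ` orbit_of N u \<subseteq> orbit_of N (g u)"
  proof
    fix x assume "x \<in> g ` orbit_of N u"
    then obtain n where n: "n \<in> N" "x = g (n u)" unfolding orbit_of_def by blast
    obtain n' where "n' \<in> N" "g (n u) = n' (g u)" using normal_commute[OF g n(1)] u by metis
    then show "x \<in> orbit_of N (g u)" using n(2) unfolding orbit_of_def by blast
  qed
  show "orbit_of N (g u) \<subseteq> g ` orbit_of N u"
  proof
    fix x assume "x \<in> orbit_of N (g u)"
    then obtain n where n: "n \<in> N" "x = n (g u)" unfolding orbit_of_def by blast
    let ?g' = "restrict (inv_into V g) V"
    have g': "?g' \<in> G" using perm_inv_closed[OF G g] .
    obtain n' where n': "n' \<in> N" "\<And>y. y \<in> V \<Longrightarrow> ?g' (n y) = n' (?g' y)"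
      using normal_commute[OF g' n(1)] by metis
    have gu: "g u \<in> V" using perm_apply_closed[OF G g u] .
    have "x = g (?g' (n (g u)))"
      using n perm_apply_inv[OF G g] perm_apply_closed[OF normal_subgroup_BijGroup n(1) gu] by simp
    also have "\<dots> = g (n' u)" using n'(2)[OF gu] perm_inv_apply[OF G g u] by simp
    finally show "x \<in> g ` orbit_of N u" using n'(1) unfolding orbit_of_def by blast
  qed
qed

end

lemma graph_connected_induct:
  assumes "graph_connected V E" "a \<in> V" "v \<in> V" "P a"
    and step: "\<And>u v. u \<in> V \<Longrightarrow> v \<in> V \<Longrightarrow> E u v \<Longrightarrow> P u \<Longrightarrow> P v"
  shows "P v"
proof -
  have "(\<lambda>x y. x \<in> V \<and> y \<in> V \<and> E x y)\<^sup>*\<^sup>* a v"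
    using assms(1-3) unfolding graph_connected_def by blast
  then show ?thesis
    by (induction rule: rtranclp_induct) (use assms(4) step in blast)+
qed

lemma Aut_neighbours_image:
  assumes g: "g \<in> Aut V E" and u: "u \<in> V"
  shows "neighbours V E (g u) = g ` neighbours V E u"
proof -
  have bij: "bij_betw g V V" using g unfolding Aut_def Bij_def by blast
  have adj: "E (g u) (g w) \<longleftrightarrow> E u w" if "w \<in> V" for w
    using g u that unfolding Aut_def by blast
  have "neighbours V E (g u) = {y \<in> g ` V. E (g u) y}"
    using bij_betw_imp_surj_on[OF bij] unfolding neighbours_def by simp
  also have "\<dots> = g ` neighbours V E u"
    using adj unfolding neighbours_def by blast
  finally show ?thesis .
qed

section \<open>Cubic graphs over a cycle quotient\<close>

locale cubic_cycle_quotient =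
  fixes V :: "'a set" and E :: "'a \<Rightarrow> 'a \<Rightarrow> bool"
    and G N :: "('a \<Rightarrow> 'a) set" and \<alpha> :: 'a
  assumes simple: "simple_graph V E" and connected: "graph_connected V E" and cubic: "cubic V E"
    and \<alpha>_in_V: "\<alpha> \<in> V"
    and G_subgroup: "subgroup G (BijGroup V)" and G_Aut: "G \<subseteq> Aut V E"
    and G_transitive: "vertex_transitive V G"
    and N_normal: "normal N (BijGroup V \<lparr>carrier := G\<rparr>)" and N_semiregular: "semiregular V N"
    and quotient_cycle: "is_cycle (orbits V N) (quot_adj E)"
begin

abbreviation "orb \<equiv> orbit_of N"
abbreviation "nbrs \<equiv> neighbours V E"
abbreviation "qnbrs \<equiv> neighbours (orbits V N) (quot_adj E)"
abbreviation "nbr_count u B \<equiv> card (nbrs u \<inter> B)"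
abbreviation "K \<equiv> orbit_kernel V G N"

lemma N_subgroup: "subgroup N (BijGroup V)"
  using normal_subgroup_BijGroup[OF G_subgroup N_normal] .

lemma N_subset_G: "N \<subseteq> G"
  using normal_subset[OF G_subgroup N_normal] .

lemma G_apply_closed: "g \<in> G \<Longrightarrow> x \<in> V \<Longrightarrow> g x \<in> V"
  using perm_apply_closed[OF G_subgroup] .

lemma G_inj_on: "g \<in> G \<Longrightarrow> inj_on g V"
  using bij_betw_imp_inj_on[OF perm_bij_betw[OF G_subgroup]] .

lemma finite_V: "finite V"
  using simple unfolding simple_graph_def by blast

lemma edge_sym: "E u v \<Longrightarrow> E v u"
  using simple unfolding simple_graph_def by blast

lemma edge_in_V: "E u v \<Longrightarrow> u \<in> V \<and> v \<in> V"
  using simple unfolding simple_graph_def by blast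

lemma nbrs_iff: "v \<in> nbrs u \<longleftrightarrow> v \<in> V \<and> E u v"
  unfolding neighbours_def by simp

lemma nbrs_sym: "u \<in> V \<Longrightarrow> v \<in> nbrs u \<Longrightarrow> u \<in> nbrs v"
  using edge_sym by (simp add: nbrs_iff)

lemma finite_nbrs: "finite (nbrs u)"
  using finite_V unfolding neighbours_def by simp

lemma card_nbrs: "u \<in> V \<Longrightarrow> card (nbrs u) = 3"
  using cubic unfolding cubic_def by blast

lemma nbrs_image: "g \<in> G \<Longrightarrow> u \<in> V \<Longrightarrow> nbrs (g u) = g ` nbrs u"
  using Aut_neighbours_image[OF subsetD[OF G_Aut]] .

lemma orb_image: "g \<in> G \<Longrightarrow> u \<in> V \<Longrightarrow> g ` orb u = orb (g u)"
  using normal_orbit_image[OF G_subgroup N_normal] .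

lemma orb_in_orbits: "u \<in> V \<Longrightarrow> orb u \<in> orbits V N"
  unfolding orbits_def by blast

lemma orbits_image:
  assumes "g \<in> G" "B \<in> orbits V N"
  shows "g ` B \<in> orbits V N"
proof -
  obtain u where "u \<in> V" "B = orb u" using assms(2) unfolding orbits_def by blast
  then show ?thesis using assms(1) orb_image G_apply_closed orb_in_orbits by metis
qed

lemma orbits_image_eq_iff:
  "g \<in> G \<Longrightarrow> B \<in> orbits V N \<Longrightarrow> C \<in> orbits V N \<Longrightarrow> g ` B = g ` C \<longleftrightarrow> B = C"
  using inj_on_image_eq_iff[OF G_inj_on] orbits_subset[OF N_subgroup] by metis

lemma N_orbits_image:
  assumes n: "n \<in> N" and B: "B \<in> orbits V N"
  shows "n ` B = B"
proof -
  obtain u where u: "u \<in> V" "B = orb u" using B unfolding orbits_def by blast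
  have "n ` orb u = orb (n u)" using orb_image n N_subset_G u(1) by blast
  also have "\<dots> = orb u" using orbit_of_apply[OF N_subgroup n u(1)] .
  finally show ?thesis using u(2) by simp
qed

lemma nbrs_Int_image:
  assumes g: "g \<in> G" and u: "u \<in> V" and B: "B \<subseteq> V"
  shows "nbrs (g u) \<inter> g ` B = g ` (nbrs u \<inter> B)"
  using nbrs_image[OF g u] inj_on_image_Int[OF G_inj_on[OF g], of "nbrs u" B] B
  unfolding neighbours_def by simp

lemma nbr_count_image:
  assumes g: "g \<in> G" and u: "u \<in> V" and B: "B \<subseteq> V"
  shows "nbr_count (g u) (g ` B) = nbr_count u B"
proof -
  have "inj_on g (nbrs u \<inter> B)" using inj_on_subset[OF G_inj_on[OF g]] B by blast
  then show ?thesis using nbrs_Int_image[OF assms] card_image by metis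
qed

lemma nbr_count_orbit:
  assumes u: "u \<in> V" and u': "u' \<in> orb u" and B: "B \<in> orbits V N"
  shows "nbr_count u' B = nbr_count u B"
proof -
  obtain n where n: "n \<in> N" "u' = n u" using u' unfolding orbit_of_def by blast
  have "nbr_count (n u) (n ` B) = nbr_count u B"
    using nbr_count_image n(1) N_subset_G u orbits_subset[OF N_subgroup B] by blast
  then show ?thesis using n N_orbits_image[OF n(1) B] by simp
qed

lemma own_nbr_count:
  assumes u: "u \<in> V"
  shows "nbr_count u (orb u) = nbr_count \<alpha> (orb \<alpha>)"
proof -
  obtain g where g: "g \<in> G" "g \<alpha> = u"
    using G_transitive \<alpha>_in_V u unfolding vertex_transitive_def by blast
  have "nbr_count (g \<alpha>) (g ` orb \<alpha>) = nbr_count \<alpha> (orb \<alpha>)"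
    using nbr_count_image[OF g(1) \<alpha>_in_V orbit_of_subset[OF N_subgroup \<alpha>_in_V]] .
  then show ?thesis using orb_image[OF g(1) \<alpha>_in_V] g(2) by simp
qed

lemma qnbrs_iff: "C \<in> qnbrs B \<longleftrightarrow> C \<in> orbits V N \<and> B \<noteq> C \<and> (\<exists>u\<in>B. \<exists>v\<in>C. E u v)"
  unfolding neighbours_def quot_adj_def by blast

lemma finite_orbits: "finite (orbits V N)"
  using finite_V unfolding orbits_def by simp

lemma card_qnbrs: "B \<in> orbits V N \<Longrightarrow> card (qnbrs B) = 2"
  using quotient_cycle unfolding is_cycle_def by blast

lemma qnbrs_sym: "B \<in> orbits V N \<Longrightarrow> C \<in> qnbrs B \<Longrightarrow> B \<in> qnbrs C"
  unfolding qnbrs_iff using edge_sym by blast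

lemma qnbrs_image:
  assumes g: "g \<in> G" and B: "B \<in> orbits V N" and C: "C \<in> qnbrs B"
  shows "g ` C \<in> qnbrs (g ` B)"
proof -
  obtain u v where uv: "u \<in> B" "v \<in> C" "E u v" and C': "C \<in> orbits V N" "B \<noteq> C"
    using C unfolding qnbrs_iff by blast
  have "E (g u) (g v)" using uv(3) g G_Aut edge_in_V[OF uv(3)] unfolding Aut_def by blast
  then show ?thesis
    using uv C' orbits_image[OF g] orbits_image_eq_iff[OF g B] unfolding qnbrs_iff by blast
qed

lemma nbr_orbit_cases: "u \<in> V \<Longrightarrow> w \<in> nbrs u \<Longrightarrow> orb w = orb u \<or> orb w \<in> qnbrs (orb u)"
  unfolding qnbrs_iff nbrs_iff using orb_in_orbits orbit_of_self[OF N_subgroup] by blast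

lemma qnbr_has_nbr:
  assumes u: "u \<in> V" and C: "C \<in> qnbrs (orb u)"
  shows "nbrs u \<inter> C \<noteq> {}"
proof -
  obtain x y where xy: "x \<in> orb u" "y \<in> C" "E x y" and C': "C \<in> orbits V N"
    using C unfolding qnbrs_iff by blast
  have "y \<in> nbrs x \<inter> C" using xy edge_in_V[OF xy(3)] nbrs_iff by blast
  then have "nbr_count x C \<noteq> 0" using finite_nbrs by (metis card_0_eq empty_iff finite_Int)
  then show ?thesis using nbr_count_orbit[OF u xy(1) C'] by (metis card.empty)
qed

lemma qnbrs_other_image_eq:
  assumes g: "g \<in> G" "h \<in> G" and B: "B \<in> orbits V N" "g ` B = h ` B"
    and CD: "C \<in> qnbrs B" "D \<in> qnbrs B" "C \<noteq> D" "g ` C = h ` C"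
  shows "g ` D = h ` D"
proof (rule card_le_2_eq_other)
  have "card (qnbrs (g ` B)) = 2" using card_qnbrs[OF orbits_image[OF g(1) B(1)]] .
  then show "finite (qnbrs (g ` B))" "card (qnbrs (g ` B)) \<le> 2" by (simp_all add: card_ge_0_finite)
  show "{g ` D, h ` D, g ` C} \<subseteq> qnbrs (g ` B)"
    using qnbrs_image[OF g(1) B(1)] qnbrs_image[OF g(2) B(1)] B(2) CD by auto
  have "C \<in> orbits V N" "D \<in> orbits V N" using CD unfolding qnbrs_iff by auto
  then have "g ` D \<noteq> g ` C" "h ` D \<noteq> h ` C"
    using orbits_image_eq_iff[OF g(1)] orbits_image_eq_iff[OF g(2)] CD(3) by auto
  then show "g ` D \<noteq> g ` C" "h ` D \<noteq> g ` C" using CD(4) by auto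
qed

lemma local_structure:
  assumes u: "u \<in> V"
  obtains C D where "qnbrs (orb u) = {C, D}" "C \<noteq> D" "nbr_count u C \<ge> 1" "nbr_count u D \<ge> 1"
    "nbr_count u (orb u) + nbr_count u C + nbr_count u D = 3"
proof -
  have ou: "orb u \<in> orbits V N" using orb_in_orbits[OF u] .
  obtain C D where CD: "qnbrs (orb u) = {C, D}" "C \<noteq> D"
    using card_qnbrs[OF ou] by (auto simp: card_2_iff)
  then have "C \<in> qnbrs (orb u)" "D \<in> qnbrs (orb u)" by auto
  then have C: "C \<in> orbits V N" "C \<noteq> orb u" and D: "D \<in> orbits V N" "D \<noteq> orb u"
    unfolding qnbrs_iff by auto
  have "nbrs u \<subseteq> orb u \<union> C \<union> D"
  proof
    fix w assume w: "w \<in> nbrs u"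
    then have "w \<in> orb w" using orbit_of_self[OF N_subgroup] nbrs_iff by blast
    then show "w \<in> orb u \<union> C \<union> D" using nbr_orbit_cases[OF u w] CD(1) by auto
  qed
  then have split: "nbrs u = (nbrs u \<inter> orb u) \<union> (nbrs u \<inter> C) \<union> (nbrs u \<inter> D)" by blast
  have disj: "orb u \<inter> C = {}" "orb u \<inter> D = {}" "C \<inter> D = {}"
    using orbits_disjoint[OF N_subgroup] ou C D CD(2) by auto
  have "card ((nbrs u \<inter> orb u) \<union> (nbrs u \<inter> C)) = nbr_count u (orb u) + nbr_count u C"
    by (rule card_Un_disjoint) (use finite_nbrs disj in auto)
  moreover have "card ((nbrs u \<inter> orb u) \<union> (nbrs u \<inter> C) \<union> (nbrs u \<inter> D))
      = card ((nbrs u \<inter> orb u) \<union> (nbrs u \<inter> C)) + nbr_count u D"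
    by (rule card_Un_disjoint) (use finite_nbrs disj in auto)
  moreover have "card (nbrs u) = card ((nbrs u \<inter> orb u) \<union> (nbrs u \<inter> C) \<union> (nbrs u \<inter> D))"
    using split by (rule arg_cong)
  ultimately have "nbr_count u (orb u) + nbr_count u C + nbr_count u D = 3"
    using card_nbrs[OF u] by linarith
  moreover have "nbr_count u C \<ge> 1" "nbr_count u D \<ge> 1"
    using qnbr_has_nbr[OF u] CD(1) finite_nbrs by (simp_all add: Suc_le_eq card_gt_0_iff)
  ultimately show ?thesis using that CD by blast
qed

lemma own_nbr_count_le_1: "nbr_count \<alpha> (orb \<alpha>) \<le> 1"
proof -
  obtain C D where "qnbrs (orb \<alpha>) = {C, D}" "C \<noteq> D" "nbr_count \<alpha> C \<ge> 1" "nbr_count \<alpha> D \<ge> 1"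
    "nbr_count \<alpha> (orb \<alpha>) + nbr_count \<alpha> C + nbr_count \<alpha> D = 3"
    by (rule local_structure[OF \<alpha>_in_V])
  then show ?thesis by linarith
qed

end

section \<open>One neighbour inside each orbit\<close>

locale cubic_cycle_quotient_inner_matching = cubic_cycle_quotient +
  assumes own_nbr_count_eq_1: "nbr_count \<alpha> (orb \<alpha>) = 1"
begin

lemma nbr_count_eq_1:
  assumes u: "u \<in> V" and B: "B = orb u \<or> B \<in> qnbrs (orb u)"
  shows "nbr_count u B = 1"
proof -
  obtain C D where "qnbrs (orb u) = {C, D}" "C \<noteq> D" "nbr_count u C \<ge> 1" "nbr_count u D \<ge> 1"
    "nbr_count u (orb u) + nbr_count u C + nbr_count u D = 3"
    by (rule local_structure[OF u])
  moreover have "nbr_count u (orb u) = 1" using own_nbr_count[OF u] own_nbr_count_eq_1 by simp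
  ultimately show ?thesis using B by auto
qed

lemma nbrs_Int_orb:
  assumes u: "u \<in> V" and v: "v \<in> nbrs u"
  shows "nbrs u \<inter> orb v = {v}"
proof -
  have "nbr_count u (orb v) = 1" using nbr_count_eq_1[OF u] nbr_orbit_cases[OF u v] by metis
  moreover have "v \<in> nbrs u \<inter> orb v" using v orbit_of_self[OF N_subgroup] nbrs_iff by blast
  ultimately show ?thesis by (metis card_1_singletonE singletonD)
qed

lemma nbr_eq_if_orbit_image_eq:
  assumes g: "g \<in> G" "h \<in> G" and u: "u \<in> V" and v: "v \<in> nbrs u"
    and eq: "g u = h u" "g ` orb v = h ` orb v"
  shows "g v = h v"
proof -
  have orb_v: "orb v \<subseteq> V" using v orbit_of_subset[OF N_subgroup] nbrs_iff by blast
  have "{g v} = nbrs (g u) \<inter> g ` orb v"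
    using nbrs_Int_image[OF g(1) u orb_v] nbrs_Int_orb[OF u v] by simp
  also have "\<dots> = {h v}"
    using nbrs_Int_image[OF g(2) u orb_v] nbrs_Int_orb[OF u v] eq by simp
  finally show ?thesis by simp
qed

lemma G_eqI:
  assumes g: "g \<in> G" "h \<in> G" and base: "g \<alpha> = h \<alpha>" "\<And>C. C \<in> qnbrs (orb \<alpha>) \<Longrightarrow> g ` C = h ` C"
  shows "g = h"
proof -
  let ?P = "\<lambda>v. g v = h v \<and> (\<forall>C\<in>qnbrs (orb v). g ` C = h ` C)"
  have "?P v" if "v \<in> V" for v
  proof (rule graph_connected_induct[OF connected \<alpha>_in_V that])
    show "?P \<alpha>" using base by blast
  next
    fix u v assume u: "u \<in> V" and v: "v \<in> V" and uv: "E u v" and IH: "?P u"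
    have vu: "v \<in> nbrs u" "u \<in> nbrs v" using u v uv edge_sym nbrs_iff by auto
    have orb_u: "g ` orb u = h ` orb u" using orb_image[OF g(1) u] orb_image[OF g(2) u] IH by simp
    have orb_v: "g ` orb v = h ` orb v" using nbr_orbit_cases[OF u vu(1)] orb_u IH by metis
    have "g ` C = h ` C" if C: "C \<in> qnbrs (orb v)" for C
    proof (cases "orb v = orb u \<or> C = orb u")
      case True
      then show ?thesis using IH C orb_u by metis
    next
      case False
      then have "orb u \<in> qnbrs (orb v)" "orb u \<noteq> C" using nbr_orbit_cases[OF v vu(2)] by auto
      then show ?thesis using qnbrs_other_image_eq[OF g orb_in_orbits[OF v] orb_v _ C _ orb_u] by simp
    qed
    moreover have "g v = h v" using nbr_eq_if_orbit_image_eq[OF g u vu(1)] IH orb_v by simp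
    ultimately show "?P v" by simp
  qed
  then show ?thesis using perm_eqI[OF G_subgroup g] by simp
qed

lemma card_stab_le_2: "card (stab G \<alpha>) \<le> 2"
proof -
  have orb_\<alpha>: "orb \<alpha> \<in> orbits V N" using orb_in_orbits[OF \<alpha>_in_V] .
  obtain C D where CD: "qnbrs (orb \<alpha>) = {C, D}" "C \<noteq> D"
    using card_qnbrs[OF orb_\<alpha>] by (auto simp: card_2_iff)
  have fixes_orb: "g ` orb \<alpha> = orb \<alpha>" if "g \<in> stab G \<alpha>" for g
  proof -
    have "g \<in> G" "g \<alpha> = \<alpha>" using that unfolding stab_def by auto
    then show ?thesis using orb_image[OF _ \<alpha>_in_V, of g] by simp
  qed
  have maps_to: "(\<lambda>g. g ` C) ` stab G \<alpha> \<subseteq> qnbrs (orb \<alpha>)"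
  proof
    fix B assume "B \<in> (\<lambda>g. g ` C) ` stab G \<alpha>"
    then obtain g where g: "g \<in> stab G \<alpha>" "B = g ` C" by blast
    then have "g \<in> G" unfolding stab_def by simp
    then show "B \<in> qnbrs (orb \<alpha>)"
      using qnbrs_image[OF _ orb_\<alpha>, of g C] fixes_orb[OF g(1)] g(2) CD(1) by simp
  qed
  have inj: "inj_on (\<lambda>g. g ` C) (stab G \<alpha>)"
  proof (rule inj_onI)
    fix g h assume gh: "g \<in> stab G \<alpha>" "h \<in> stab G \<alpha>" "g ` C = h ` C"
    then have g: "g \<in> G" "h \<in> G" "g \<alpha> = h \<alpha>" unfolding stab_def by auto
    have "g ` orb \<alpha> = h ` orb \<alpha>" using fixes_orb gh(1,2) by simp
    moreover have "C \<in> qnbrs (orb \<alpha>)" "D \<in> qnbrs (orb \<alpha>)" using CD(1) by auto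
    ultimately have "g ` D = h ` D"
      using qnbrs_other_image_eq[OF g(1,2) orb_\<alpha>] gh(3) CD(2) by simp
    then have "\<And>B. B \<in> qnbrs (orb \<alpha>) \<Longrightarrow> g ` B = h ` B"
      using gh(3) CD(1) by (metis insertE singletonD)
    then show "g = h" by (rule G_eqI[OF g])
  qed
  have "finite (qnbrs (orb \<alpha>))" using card_qnbrs[OF orb_\<alpha>] by (simp add: card_ge_0_finite)
  then have "card (stab G \<alpha>) \<le> card (qnbrs (orb \<alpha>))" by (rule card_inj_on_le[OF inj maps_to])
  then show ?thesis using card_qnbrs[OF orb_\<alpha>] by simp
qed

lemma stab_kernel_trivial: "stab K \<alpha> = {\<one>\<^bsub>BijGroup V\<^esub>}"
proof -
  let ?id = "\<lambda>x\<in>V. x"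
  have id: "?id \<in> G" using perm_id_closed[OF G_subgroup] .
  have id_image: "?id ` B = B" if "B \<in> orbits V N" for B
    using orbits_subset[OF N_subgroup that] by auto
  have "k = ?id" if k: "k \<in> stab K \<alpha>" for k
  proof -
    have "k \<in> G" "k \<alpha> = \<alpha>" and k_image: "\<And>B. B \<in> orbits V N \<Longrightarrow> k ` B = B"
      using k unfolding stab_def orbit_kernel_def by auto
    moreover have "k ` C = ?id ` C" if "C \<in> qnbrs (orb \<alpha>)" for C
    proof -
      have "C \<in> orbits V N" using that unfolding qnbrs_iff by simp
      then show ?thesis using k_image id_image by simp
    qed
    ultimately show ?thesis using G_eqI[OF _ id] \<alpha>_in_V by simp
  qed
  moreover have "?id \<in> stab K \<alpha>"
  proof -
    have "?id \<in> K" unfolding orbit_kernel_def using id id_image by blast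
    then show ?thesis unfolding stab_def using \<alpha>_in_V by simp
  qed
  ultimately have "stab K \<alpha> = {?id}" by blast
  then show ?thesis by (simp add: BijGroup_def)
qed

end

section \<open>No edges inside orbits\<close>

context cubic_cycle_quotient
begin

lemma card_orbits_eq:
  assumes B: "B \<in> orbits V N" and C: "C \<in> orbits V N"
  shows "card B = card C"
proof -
  obtain x y where x: "x \<in> V" "B = orb x" and y: "y \<in> V" "C = orb y"
    using B C unfolding orbits_def by blast
  obtain g where g: "g \<in> G" "g x = y" using G_transitive x y unfolding vertex_transitive_def by blast
  have "inj_on g B" using inj_on_subset[OF G_inj_on[OF g(1)] orbits_subset[OF N_subgroup B]] .
  then have "card (g ` B) = card B" by (rule card_image)
  moreover have "g ` B = C" using orb_image[OF g(1) x(1)] x(2) y(2) g(2) by simp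
  ultimately show ?thesis by simp
qed

lemma sum_nbr_count_swap:
  assumes "B \<subseteq> V" "C \<subseteq> V"
  shows "(\<Sum>x\<in>B. nbr_count x C) = (\<Sum>y\<in>C. nbr_count y B)"
proof -
  have count: "nbrs x \<inter> A = {y \<in> A. E x y}" if "A \<subseteq> V" for x A
    using that unfolding neighbours_def by blast
  have swap: "{x \<in> B. E x y} = {x \<in> B. E y x}" for y
    using edge_sym by blast
  have "finite B" "finite C" using assms finite_subset finite_V by auto
  then have "(\<Sum>x\<in>B. card {y \<in> C. E x y}) = (\<Sum>y\<in>C. card {x \<in> B. E y x})"
    unfolding swap[symmetric] by (rule sum_card_relation_swap)
  then show ?thesis using count[OF assms(1)] count[OF assms(2)] by simp
qed

lemma kernel_subset_G: "K \<subseteq> G"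
  unfolding orbit_kernel_def by blast

lemma kernel_orbits_image: "k \<in> K \<Longrightarrow> B \<in> orbits V N \<Longrightarrow> k ` B = B"
  unfolding orbit_kernel_def by blast

lemma kernel_apply_in_orb: "k \<in> K \<Longrightarrow> u \<in> V \<Longrightarrow> k u \<in> orb u"
  using kernel_orbits_image orb_in_orbits orbit_of_self[OF N_subgroup] by blast

lemma kernel_agrees_with_N:
  assumes "k \<in> K" "u \<in> V"
  obtains n where "n \<in> N" "k u = n u"
  using kernel_apply_in_orb[OF assms] unfolding orbit_of_def by blast

lemma kernel_nbr_image:
  assumes k: "k \<in> K" and u: "u \<in> V" and n: "n \<in> N" "k u = n u" and v: "v \<in> nbrs u"
  obtains w where "w \<in> nbrs u \<inter> orb v" "k v = n w"
proof -
  have kG: "k \<in> G" and nG: "n \<in> G" using k n kernel_subset_G N_subset_G by auto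
  have vV: "v \<in> V" using v nbrs_iff by blast
  have "k v \<in> nbrs (n u)" using nbrs_image[OF kG u] v n(2) by auto
  then obtain w where w: "w \<in> nbrs u" "k v = n w" using nbrs_image[OF nG u] by auto
  have wV: "w \<in> V" using w(1) nbrs_iff by blast
  have "orb w = orb (k v)" using orbit_of_apply[OF N_subgroup n(1) wV] w(2) by simp
  also have "\<dots> = orb v" using orbit_of_eq[OF N_subgroup vV kernel_apply_in_orb[OF k vV]] .
  finally have "w \<in> orb v" using orbit_of_self[OF N_subgroup wV] by simp
  then show ?thesis using that w by blast
qed

definition N_coherent :: "('a \<Rightarrow> 'a) \<Rightarrow> 'a \<Rightarrow> 'a \<Rightarrow> bool" where
  "N_coherent k u v \<longleftrightarrow> (\<exists>n\<in>N. k u = n u \<and> k v = n v)"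

lemma N_coherent_sym: "N_coherent k u v \<longleftrightarrow> N_coherent k v u"
  unfolding N_coherent_def by blast

lemma N_coherent_iff:
  assumes n: "n \<in> N" "k u = n u" and u: "u \<in> V"
  shows "N_coherent k u v \<longleftrightarrow> k v = n v"
proof
  assume "N_coherent k u v"
  then obtain n' where n': "n' \<in> N" "k u = n' u" "k v = n' v" unfolding N_coherent_def by blast
  have "n' = n" using semiregular_eqI[OF N_subgroup N_semiregular n'(1) n(1) u] n'(2) n(2) by simp
  then show "k v = n v" using n'(3) by simp
next
  assume "k v = n v"
  then show "N_coherent k u v" unfolding N_coherent_def using n by blast
qed

lemma N_coherent_translate:
  assumes k: "k \<in> K" and m: "m \<in> N" and uv: "u \<in> V" "v \<in> V" and coh: "N_coherent k u v"
  shows "N_coherent k (m u) (m v)"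
proof -
  obtain n where n: "n \<in> N" "k u = n u" "k v = n v" using coh unfolding N_coherent_def by blast
  obtain m' where m': "m' \<in> N" "\<And>x. x \<in> V \<Longrightarrow> k (m x) = m' (k x)"
    using normal_commute[OF G_subgroup N_normal _ m] k kernel_subset_G by blast
  let ?p = "compose V (compose V m' n) (restrict (inv_into V m) V)"
  have "?p \<in> N" using perm_compose_closed perm_inv_closed N_subgroup m m'(1) n(1) by metis
  moreover have "?p (m x) = m' (n x)" if "x \<in> V" for x
    using that perm_apply_closed[OF N_subgroup] perm_inv_apply[OF N_subgroup m] m n(1) m'(1)
    by (simp add: compose_eq)
  ultimately show ?thesis unfolding N_coherent_def using m'(2) uv n(2,3) by metis
qed

end

locale cubic_cycle_quotient_no_inner_edges = cubic_cycle_quotient +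
  assumes own_nbr_count_eq_0: "nbr_count \<alpha> (orb \<alpha>) = 0"
begin

lemma nbr_orbit_qnbr:
  assumes u: "u \<in> V" and v: "v \<in> nbrs u"
  shows "orb v \<in> qnbrs (orb u)"
proof -
  have "nbrs u \<inter> orb u = {}"
    using own_nbr_count[OF u] own_nbr_count_eq_0 finite_nbrs by simp
  moreover have "v \<in> orb v" using v nbrs_iff orbit_of_self[OF N_subgroup] by blast
  ultimately have "orb v \<noteq> orb u" using v by blast
  then show ?thesis using nbr_orbit_cases[OF u v] by simp
qed

lemma qnbrs_split:
  assumes u: "u \<in> V"
  obtains D S where "qnbrs (orb u) = {D, S}" "D \<noteq> S" "nbr_count u D = 2" "nbr_count u S = 1"
proof -
  obtain C C' where CC': "qnbrs (orb u) = {C, C'}" "C \<noteq> C'" "nbr_count u C \<ge> 1" "nbr_count u C' \<ge> 1"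
    "nbr_count u (orb u) + nbr_count u C + nbr_count u C' = 3"
    by (rule local_structure[OF u])
  have "nbr_count u (orb u) = 0" using own_nbr_count[OF u] own_nbr_count_eq_0 by simp
  then consider "nbr_count u C = 2" "nbr_count u C' = 1" | "nbr_count u C = 1" "nbr_count u C' = 2"
    using CC'(3-5) by linarith
  then show ?thesis
  proof cases
    case 1
    then show ?thesis using that CC'(1,2) by blast
  next
    case 2
    then show ?thesis using that[of C' C] CC'(1,2) by (simp add: insert_commute)
  qed
qed

lemma nbr_count_qnbr_cases:
  assumes "u \<in> V" "C \<in> qnbrs (orb u)"
  shows "nbr_count u C = 1 \<or> nbr_count u C = 2"
proof -
  obtain D S where "qnbrs (orb u) = {D, S}" "nbr_count u D = 2" "nbr_count u S = 1"
    using qnbrs_split[OF assms(1)] by metis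
  then show ?thesis using assms(2) by auto
qed

lemma qnbrs_eq_if_nbr_count_eq:
  assumes "u \<in> V" "C \<in> qnbrs (orb u)" "C' \<in> qnbrs (orb u)" "nbr_count u C = nbr_count u C'"
  shows "C = C'"
proof -
  obtain D S where "qnbrs (orb u) = {D, S}" "nbr_count u D = 2" "nbr_count u S = 1"
    using qnbrs_split[OF assms(1)] by metis
  then show ?thesis using assms(2-4) by auto
qed

lemma nbr_count_nbr_orbit_le_2:
  assumes "u \<in> V" "v \<in> nbrs u"
  shows "nbr_count u (orb v) \<le> 2"
  using nbr_count_qnbr_cases[OF assms(1) nbr_orbit_qnbr[OF assms]] by linarith

lemma stab_subset_kernel: "stab G \<alpha> \<subseteq> K"
proof
  fix g assume "g \<in> stab G \<alpha>"
  then have g: "g \<in> G" "g \<alpha> = \<alpha>" unfolding stab_def by auto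
  have "g ` orb v = orb v" if "v \<in> V" for v
  proof (rule graph_connected_induct[OF connected \<alpha>_in_V that])
    show "g ` orb \<alpha> = orb \<alpha>" using orb_image[OF g(1) \<alpha>_in_V] g(2) by simp
  next
    fix u v assume u: "u \<in> V" and v: "v \<in> V" and uv: "E u v" and IH: "g ` orb u = orb u"
    have vu: "v \<in> nbrs u" using v uv nbrs_iff by blast
    have gu: "g u \<in> V" "g v \<in> V" using G_apply_closed[OF g(1)] u v by auto
    have orb_gu: "orb (g u) = orb u" using orb_image[OF g(1) u] IH by simp
    have "g v \<in> nbrs (g u)" using nbrs_image[OF g(1) u] vu by blast
    then have qnbr_gv: "orb (g v) \<in> qnbrs (orb u)" using nbr_orbit_qnbr[OF gu(1)] orb_gu by simp
    have "nbr_count u (orb (g v)) = nbr_count (g u) (orb (g v))"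
      using nbr_count_orbit[OF u _ orb_in_orbits[OF gu(2)]] orb_gu orbit_of_self[OF N_subgroup gu(1)]
      by simp
    also have "\<dots> = nbr_count u (orb v)"
      using nbr_count_image[OF g(1) u orbit_of_subset[OF N_subgroup v]] orb_image[OF g(1) v] by simp
    finally have "orb (g v) = orb v"
      using qnbrs_eq_if_nbr_count_eq[OF u qnbr_gv nbr_orbit_qnbr[OF u vu]] by simp
    then show "g ` orb v = orb v" using orb_image[OF g(1) v] by simp
  qed
  then have "g ` B = B" if "B \<in> orbits V N" for B
    using that unfolding orbits_def by blast
  then show "g \<in> K" unfolding orbit_kernel_def using g(1) by blast
qed

lemma stab_eq_stab_kernel: "stab G \<alpha> = stab K \<alpha>"
  using stab_subset_kernel kernel_subset_G unfolding stab_def by blast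

lemma nbrs_Int_orb_card_le_2:
  assumes "u \<in> V" "v \<in> nbrs u"
  shows "finite (nbrs u \<inter> orb v)" "card (nbrs u \<inter> orb v) \<le> 2"
  using finite_nbrs nbr_count_nbr_orbit_le_2[OF assms] by auto

lemma kernel_swaps_nbrs:
  assumes k: "k \<in> K" and u: "u \<in> V" and n: "n \<in> N" "k u = n u" and v: "v \<in> nbrs u"
    and incoherent: "\<not> N_coherent k u v"
  obtains w where "w \<in> nbrs u \<inter> orb v" "w \<noteq> v" "k v = n w" "k w = n v"
proof -
  have vV: "v \<in> V" using v nbrs_iff by blast
  obtain w where w: "w \<in> nbrs u \<inter> orb v" "k v = n w" by (rule kernel_nbr_image[OF k u n v])
  have "w \<noteq> v" using incoherent N_coherent_iff[where k = k, OF n u] w(2) by auto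
  have w_nbr: "w \<in> nbrs u" and wV: "w \<in> V" using w(1) nbrs_iff by auto
  obtain w' where w': "w' \<in> nbrs u \<inter> orb w" "k w = n w'" by (rule kernel_nbr_image[OF k u n w_nbr])
  have "orb w = orb v" using orbit_of_eq[OF N_subgroup vV] w(1) by blast
  then have w'_in: "w' \<in> nbrs u \<inter> orb v" using w'(1) by simp
  have "w' \<noteq> w"
  proof
    assume "w' = w"
    then have "k w = k v" using w(2) w'(2) by simp
    then show False
      using inj_onD[OF G_inj_on] k kernel_subset_G wV vV \<open>w \<noteq> v\<close> by blast
  qed
  then have "w' = v"
    using card_le_2_eq_other[OF nbrs_Int_orb_card_le_2[OF u v], of w' v w] w(1) w'_in \<open>w \<noteq> v\<close> v
      orbit_of_self[OF N_subgroup vV] by blast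
  then show ?thesis using that w \<open>w \<noteq> v\<close> w'(2) by blast
qed

lemma N_coherent_single:
  assumes k: "k \<in> K" and u: "u \<in> V" and v: "v \<in> nbrs u" and single: "nbr_count u (orb v) = 1"
  shows "N_coherent k u v"
proof (rule ccontr)
  assume incoherent: "\<not> N_coherent k u v"
  obtain n where n: "n \<in> N" "k u = n u" by (rule kernel_agrees_with_N[OF k u])
  obtain w where "w \<in> nbrs u \<inter> orb v" "w \<noteq> v"
    by (rule kernel_swaps_nbrs[OF k u n v incoherent])
  moreover have "v \<in> nbrs u \<inter> orb v" using v nbrs_iff orbit_of_self[OF N_subgroup] by blast
  ultimately show False using single by (metis card_1_singletonE singletonD)
qed

lemma N_coherent_same_orbit:
  assumes k: "k \<in> K" and u: "u \<in> V" and v: "v \<in> nbrs u" and w: "w \<in> nbrs u \<inter> orb v"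
    and coherent: "N_coherent k u v"
  shows "N_coherent k u w"
proof (rule ccontr)
  assume incoherent: "\<not> N_coherent k u w"
  then have "w \<noteq> v" using coherent by blast
  have vV: "v \<in> V" and w_nbr: "w \<in> nbrs u" and wV: "w \<in> V" using v w nbrs_iff by auto
  obtain n where n: "n \<in> N" "k u = n u" by (rule kernel_agrees_with_N[OF k u])
  have kv: "k v = n v" using coherent N_coherent_iff[where k = k, OF n u] by blast
  obtain w' where w': "w' \<in> nbrs u \<inter> orb w" "w' \<noteq> w" "k w = n w'"
    by (rule kernel_swaps_nbrs[OF k u n w_nbr incoherent])
  have "orb w = orb v" using orbit_of_eq[OF N_subgroup vV] w by blast
  then have "w' = v"
    using card_le_2_eq_other[OF nbrs_Int_orb_card_le_2[OF u v], of w' v w] w w'(1,2) \<open>w \<noteq> v\<close> v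
      orbit_of_self[OF N_subgroup vV] by blast
  then have "k w = k v" using kv w'(3) by simp
  then show False using inj_onD[OF G_inj_on] k kernel_subset_G wV vV \<open>w \<noteq> v\<close> by blast
qed

lemma N_coherent_orbit_invariant:
  assumes k: "k \<in> K" and u: "u \<in> V" and v: "v \<in> nbrs u" and coherent: "N_coherent k u v"
    and u': "u' \<in> orb u" and v': "v' \<in> nbrs u'" "orb v' = orb v"
  shows "N_coherent k u' v'"
proof -
  obtain m where m: "m \<in> N" "u' = m u" using u' unfolding orbit_of_def by blast
  have "v' \<in> m ` nbrs u" using v'(1) nbrs_image m N_subset_G u by blast
  then obtain w where w: "w \<in> nbrs u" "v' = m w" by blast
  have wV: "w \<in> V" using w(1) nbrs_iff by blast
  have "orb w = orb v" using orbit_of_apply[OF N_subgroup m(1) wV] w(2) v'(2) by simp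
  then have "w \<in> nbrs u \<inter> orb v" using w(1) orbit_of_self[OF N_subgroup wV] by simp
  then have "N_coherent k u w" by (rule N_coherent_same_orbit[OF k u v _ coherent])
  then show ?thesis using N_coherent_translate[OF k m(1) u wV] m(2) w(2) by simp
qed

lemma kernel_stab_involution:
  assumes k: "k \<in> K" "k \<alpha> = \<alpha>" and x: "x \<in> V"
  shows "k (k x) = x"
proof (rule graph_connected_induct[OF connected \<alpha>_in_V x])
  show "k (k \<alpha>) = \<alpha>" using k(2) by simp
next
  fix u v assume u: "u \<in> V" and v: "v \<in> V" and uv: "E u v" and IH: "k (k u) = u"
  have vu: "v \<in> nbrs u" using v uv nbrs_iff by blast
  have kG: "k \<in> G" using k(1) kernel_subset_G by blast
  obtain n where n: "n \<in> N" "k u = n u" by (rule kernel_agrees_with_N[OF k(1) u])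
  obtain n' where n': "n' \<in> N" "\<And>y. y \<in> V \<Longrightarrow> k (n y) = n' (k y)"
    using normal_commute[OF G_subgroup N_normal kG n(1)] by blast
  have "compose V n' n = (\<lambda>y\<in>V. y)"
  proof (rule semiregular_eqI[OF N_subgroup N_semiregular _ perm_id_closed[OF N_subgroup] u])
    show "compose V n' n \<in> N" using perm_compose_closed[OF N_subgroup n'(1) n(1)] .
    show "compose V n' n u = (\<lambda>y\<in>V. y) u" using n'(2)[OF u] n(2) IH u by (simp add: compose_eq)
  qed
  then have n'n: "n' (n y) = y" if "y \<in> V" for y
    using that by (metis compose_eq restrict_apply')
  show "k (k v) = v"
  proof (cases "N_coherent k u v")
    case True
    then have "k v = n v" using N_coherent_iff[where k = k, OF n u] by blast
    then show ?thesis using n'(2)[OF v] n'n[OF v] by simp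
  next
    case False
    obtain w where w: "w \<in> nbrs u \<inter> orb v" "k v = n w" "k w = n v"
      by (rule kernel_swaps_nbrs[OF k(1) u n vu False])
    have "w \<in> V" using w(1) nbrs_iff by blast
    then show ?thesis using n'(2) n'n[OF v] w(2,3) by simp
  qed
qed

lemma kernel_eqI:
  assumes k: "k \<in> K" and h: "h \<in> K" and base: "k \<alpha> = h \<alpha>"
    and coherent: "\<And>u v. u \<in> V \<Longrightarrow> v \<in> nbrs u \<Longrightarrow> N_coherent k u v \<longleftrightarrow> N_coherent h u v"
  shows "k = h"
proof -
  have "k x = h x" if "x \<in> V" for x
  proof (rule graph_connected_induct[OF connected \<alpha>_in_V that])
    show "k \<alpha> = h \<alpha>" by (fact base)
  next
    fix u v assume u: "u \<in> V" and v: "v \<in> V" and uv: "E u v" and IH: "k u = h u"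
    have vu: "v \<in> nbrs u" using v uv nbrs_iff by blast
    obtain n where n: "n \<in> N" "k u = n u" by (rule kernel_agrees_with_N[OF k u])
    have n': "h u = n u" using n(2) IH by simp
    show "k v = h v"
    proof (cases "N_coherent k u v")
      case True
      then show ?thesis
        using coherent[OF u vu] N_coherent_iff[where k = k, OF n u]
          N_coherent_iff[where k = h, OF n(1) n' u] by simp
    next
      case False
      obtain w where w: "w \<in> nbrs u \<inter> orb v" "w \<noteq> v" "k v = n w"
        by (rule kernel_swaps_nbrs[OF k u n vu False])
      obtain w' where w': "w' \<in> nbrs u \<inter> orb v" "w' \<noteq> v" "h v = n w'"
        using kernel_swaps_nbrs[OF h u n(1) n' vu] False coherent[OF u vu] by blast
      have "w = w'"
        using card_le_2_eq_other[OF nbrs_Int_orb_card_le_2[OF u vu], of w w' v] w w' vu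
          orbit_of_self[OF N_subgroup v] by blast
      then show ?thesis using w(3) w'(3) by simp
    qed
  qed
  then show ?thesis using perm_eqI[OF G_subgroup] k h kernel_subset_G by blast
qed

definition double_orbit :: "'a set \<Rightarrow> 'a set" where
  "double_orbit B = (THE C. C \<in> qnbrs B \<and> (\<forall>u\<in>B. nbr_count u C = 2))"

lemma double_orbit_eqI:
  assumes B: "B \<in> orbits V N" and u: "u \<in> B" and C: "C \<in> qnbrs B" "nbr_count u C = 2"
  shows "double_orbit B = C"
  unfolding double_orbit_def
proof (rule the_equality)
  have uV: "u \<in> V" and B_eq: "B = orb u" using orbits_memD[OF N_subgroup B u] by auto
  have "C \<in> orbits V N" using C(1) unfolding qnbrs_iff by simp
  then have "nbr_count u' C = 2" if "u' \<in> B" for u'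
    using nbr_count_orbit[OF uV, of u' C] that C(2) B_eq by simp
  then show "C \<in> qnbrs B \<and> (\<forall>u'\<in>B. nbr_count u' C = 2)" using C(1) by blast
  show "C' = C" if "C' \<in> qnbrs B \<and> (\<forall>u'\<in>B. nbr_count u' C' = 2)" for C'
    using qnbrs_eq_if_nbr_count_eq[OF uV, of C' C] that C u B_eq by simp
qed

lemma double_orbit:
  assumes B: "B \<in> orbits V N"
  shows "double_orbit B \<in> qnbrs B" "\<And>u. u \<in> B \<Longrightarrow> nbr_count u (double_orbit B) = 2"
proof -
  obtain u where u: "u \<in> V" "B = orb u" using B unfolding orbits_def by blast
  obtain D S where D: "qnbrs (orb u) = {D, S}" "nbr_count u D = 2"
    using qnbrs_split[OF u(1)] by metis
  have "double_orbit B = D"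
    using double_orbit_eqI[OF B _ _ D(2)] D(1) u orbit_of_self[OF N_subgroup u(1)] by simp
  moreover have "D \<in> qnbrs B" using D(1) u(2) by simp
  moreover have "nbr_count u' D = 2" if "u' \<in> B" for u'
  proof -
    have "D \<in> orbits V N" using \<open>D \<in> qnbrs B\<close> unfolding qnbrs_iff by blast
    then show ?thesis using nbr_count_orbit[OF u(1), of u' D] that D(2) u(2) by simp
  qed
  ultimately show "double_orbit B \<in> qnbrs B" "\<And>u'. u' \<in> B \<Longrightarrow> nbr_count u' (double_orbit B) = 2"
    by simp_all
qed

lemma double_orbit_involution:
  assumes B: "B \<in> orbits V N"
  shows "double_orbit (double_orbit B) = B"
proof -
  let ?C = "double_orbit B"
  have C_nbr: "?C \<in> qnbrs B" by (rule double_orbit(1)[OF B])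
  then have C: "?C \<in> orbits V N" unfolding qnbrs_iff by blast
  have B_nbr: "B \<in> qnbrs ?C" by (rule qnbrs_sym[OF B C_nbr])
  obtain y where y: "y \<in> V" "?C = orb y" using C unfolding orbits_def by blast
  have y_in: "y \<in> ?C" using y orbit_of_self[OF N_subgroup] by simp
  have B_sub: "B \<subseteq> V" and C_sub: "?C \<subseteq> V" using orbits_subset[OF N_subgroup] B C by auto
  have "card B * 2 = (\<Sum>x\<in>B. nbr_count x ?C)" using double_orbit(2)[OF B] by simp
  also have "\<dots> = (\<Sum>y'\<in>?C. nbr_count y' B)" by (rule sum_nbr_count_swap[OF B_sub C_sub])
  also have "\<dots> = (\<Sum>y'\<in>?C. nbr_count y B)"
    by (rule sum.cong[OF refl], rule nbr_count_orbit[OF y(1) _ B]) (use y(2) in simp)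
  also have "\<dots> = card ?C * nbr_count y B" by simp
  also have "\<dots> = card B * nbr_count y B" using card_orbits_eq[OF B C] by simp
  finally have "card B * 2 = card B * nbr_count y B" .
  moreover have "card B \<noteq> 0"
  proof -
    obtain x where "x \<in> V" "B = orb x" using B unfolding orbits_def by blast
    then have "x \<in> B" using orbit_of_self[OF N_subgroup] by simp
    then show ?thesis using finite_subset[OF B_sub finite_V] by auto
  qed
  ultimately have "nbr_count y B = 2" by simp
  then show ?thesis by (rule double_orbit_eqI[OF C y_in B_nbr])
qed

lemma orbits_transversal:
  obtains T where "T \<subseteq> orbits V N" "card (orbits V N) = 2 * card T"
    "\<forall>B\<in>orbits V N. B \<in> T \<longleftrightarrow> double_orbit B \<notin> T"
proof -
  have "double_orbit B \<in> orbits V N \<and> double_orbit B \<noteq> B \<and> double_orbit (double_orbit B) = B"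
    if B: "B \<in> orbits V N" for B
    using double_orbit(1)[OF B] double_orbit_involution[OF B] unfolding qnbrs_iff by auto
  then show ?thesis using that by (rule fixpoint_free_involution_transversal[OF finite_orbits])
qed

definition twisted_orbits :: "('a \<Rightarrow> 'a) \<Rightarrow> 'a set set" where
  "twisted_orbits k = {B \<in> orbits V N. \<exists>u\<in>B. \<exists>v\<in>nbrs u \<inter> double_orbit B. \<not> N_coherent k u v}"

lemma twisted_orbits_iff:
  assumes k: "k \<in> K" and B: "B \<in> orbits V N" and u: "u \<in> B" and v: "v \<in> nbrs u \<inter> double_orbit B"
  shows "B \<in> twisted_orbits k \<longleftrightarrow> \<not> N_coherent k u v"
proof
  assume "B \<in> twisted_orbits k"
  then obtain u' v' where u': "u' \<in> B" and v': "v' \<in> nbrs u' \<inter> double_orbit B"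
    and incoherent: "\<not> N_coherent k u' v'"
    unfolding twisted_orbits_def by blast
  have uV: "u \<in> V" and "B = orb u" using orbits_memD[OF N_subgroup B u] by auto
  then have u'_orb: "u' \<in> orb u" using u' by simp
  have D: "double_orbit B \<in> orbits V N" using double_orbit(1)[OF B] unfolding qnbrs_iff by blast
  have "orb v' = orb v" using orbits_memD(2)[OF N_subgroup D] v v' by blast
  then show "\<not> N_coherent k u v"
    using N_coherent_orbit_invariant[OF k uV _ _ u'_orb] v v' incoherent by blast
next
  assume "\<not> N_coherent k u v"
  then show "B \<in> twisted_orbits k" unfolding twisted_orbits_def using B u v by blast
qed

lemma N_coherent_eq_if_twisted_eq:
  assumes T: "T \<subseteq> orbits V N" "\<forall>B\<in>orbits V N. B \<in> T \<longleftrightarrow> double_orbit B \<notin> T"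
    and kh: "k \<in> K" "h \<in> K" and twisted: "twisted_orbits k \<inter> T = twisted_orbits h \<inter> T"
    and u: "u \<in> V" and v: "v \<in> nbrs u"
  shows "N_coherent k u v \<longleftrightarrow> N_coherent h u v"
proof (cases "nbr_count u (orb v) = 1")
  case True
  then show ?thesis using N_coherent_single[OF _ u v] kh by blast
next
  case False
  have vV: "v \<in> V" using v nbrs_iff by blast
  have orb_u: "orb u \<in> orbits V N" and orb_v: "orb v \<in> orbits V N"
    using orb_in_orbits u vV by auto
  have "nbr_count u (orb v) = 2"
    using False nbr_count_qnbr_cases[OF u nbr_orbit_qnbr[OF u v]] by simp
  then have D_u: "double_orbit (orb u) = orb v"
    using double_orbit_eqI[OF orb_u orbit_of_self[OF N_subgroup u] nbr_orbit_qnbr[OF u v]] by simp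
  then have D_v: "double_orbit (orb v) = orb u" using double_orbit_involution[OF orb_u] by simp
  have v_in: "v \<in> nbrs u \<inter> double_orbit (orb u)" using D_u v orbit_of_self[OF N_subgroup vV] by simp
  have u_in: "u \<in> nbrs v \<inter> double_orbit (orb v)"
    using D_v nbrs_sym[OF u v] orbit_of_self[OF N_subgroup u] by simp
  consider "orb u \<in> T" | "orb v \<in> T" using T(2) orb_u D_u by metis
  then show ?thesis
  proof cases
    case 1
    then show ?thesis
      using twisted twisted_orbits_iff[OF _ orb_u orbit_of_self[OF N_subgroup u] v_in] kh by blast
  next
    case 2
    then have "N_coherent k v u \<longleftrightarrow> N_coherent h v u"
      using twisted twisted_orbits_iff[OF _ orb_v orbit_of_self[OF N_subgroup vV] u_in] kh by blast
    then show ?thesis using N_coherent_sym by blast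
  qed
qed

lemma even_card_orbits: "even (card (orbits V N))"
  using orbits_transversal by (metis dvd_triv_left)

lemma card_stab_le: "card (stab G \<alpha>) \<le> 2 ^ (card (orbits V N) div 2)"
proof -
  obtain T where T: "T \<subseteq> orbits V N" "card (orbits V N) = 2 * card T"
    "\<forall>B\<in>orbits V N. B \<in> T \<longleftrightarrow> double_orbit B \<notin> T"
    by (rule orbits_transversal)
  have "inj_on (\<lambda>k. twisted_orbits k \<inter> T) (stab K \<alpha>)"
  proof (rule inj_onI)
    fix k h assume k: "k \<in> stab K \<alpha>" and h: "h \<in> stab K \<alpha>"
      and twisted: "twisted_orbits k \<inter> T = twisted_orbits h \<inter> T"
    have "k \<in> K" "h \<in> K" "k \<alpha> = h \<alpha>" using k h unfolding stab_def by auto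
    then show "k = h"
      using kernel_eqI N_coherent_eq_if_twisted_eq[OF T(1,3) _ _ twisted] by blast
  qed
  moreover have "(\<lambda>k. twisted_orbits k \<inter> T) ` stab K \<alpha> \<subseteq> Pow T" by blast
  moreover have "finite T" using finite_subset[OF T(1) finite_orbits] .
  ultimately have "card (stab K \<alpha>) \<le> card (Pow T)"
    by (intro card_inj_on_le) auto
  then show ?thesis using stab_eq_stab_kernel T(2) \<open>finite T\<close> by (simp add: card_Pow)
qed

lemma stab_elementary_abelian: "elementary_abelian_2group (BijGroup V \<lparr>carrier := stab G \<alpha>\<rparr>)"
  (is "elementary_abelian_2group ?H")
proof (rule elementary_abelian_2groupI)
  show "group ?H"
    using subgroup.subgroup_is_group[OF stab_subgroup[OF G_subgroup \<alpha>_in_V] group_BijGroup] .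
next
  fix g assume "g \<in> carrier ?H"
  then have g: "g \<in> stab K \<alpha>" using stab_eq_stab_kernel by simp
  then have "g \<in> Bij V" using kernel_subset_G perm_Bij[OF G_subgroup] unfolding stab_def by blast
  moreover have "compose V g g = (\<lambda>x\<in>V. x)"
    using kernel_stab_involution g unfolding stab_def compose_def by auto
  ultimately show "g \<otimes>\<^bsub>?H\<^esub> g = \<one>\<^bsub>?H\<^esub>" by (simp add: BijGroup_def)
qed

end

theorem lemma2p3:
  fixes V :: "'a set" and E :: "'a \<Rightarrow> 'a \<Rightarrow> bool"
    and G N :: "('a \<Rightarrow> 'a) set" and \<alpha> :: 'a and r :: nat
  assumes "simple_graph V E" and "graph_connected V E" and "cubic V E"
    and "\<alpha> \<in> V"
    and "subgroup G (BijGroup V)" and "G \<subseteq> Aut V E" and "vertex_transitive V G"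
    and "normal N (BijGroup V \<lparr>carrier := G\<rparr>)" and "semiregular V N"
    and "\<exists>k. card (stab G \<alpha>) = 2 ^ k" and "card (stab G \<alpha>) \<noteq> 1"
    and "is_cycle (orbits V N) (quot_adj E)" and "card (orbits V N) = r" and "r \<ge> 3"
  shows "(card (stab G \<alpha>) = 2 \<and> stab (orbit_kernel V G N) \<alpha> = {\<one>\<^bsub>BijGroup V\<^esub>})
      \<or> (even r \<and> stab G \<alpha> = stab (orbit_kernel V G N) \<alpha>
         \<and> elementary_abelian_2group (BijGroup V \<lparr>carrier := stab G \<alpha>\<rparr>)
         \<and> card (stab G \<alpha>) \<le> 2 ^ (r div 2))"
proof -
  have base: "cubic_cycle_quotient V E G N \<alpha>"
    using assms(1-9,12) by (rule cubic_cycle_quotient.intro)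
  interpret cubic_cycle_quotient V E G N \<alpha> by (fact base)
  consider "nbr_count \<alpha> (orb \<alpha>) = 1" | "nbr_count \<alpha> (orb \<alpha>) = 0"
    using own_nbr_count_le_1 by linarith
  then show ?thesis
  proof cases
    case 1
    then interpret cubic_cycle_quotient_inner_matching V E G N \<alpha>
      by (intro cubic_cycle_quotient_inner_matching.intro base cubic_cycle_quotient_inner_matching_axioms.intro)
    obtain k where k: "card (stab G \<alpha>) = 2 ^ k" using assms(10) by blast
    have "(2::nat) ^ k \<le> 2 ^ 1" using k card_stab_le_2 by simp
    then have "k \<le> 1" by (simp only: power_increasing_iff[of "2::nat"])
    moreover have "k \<noteq> 0" using k assms(11) by auto
    ultimately have "k = 1" by simp
    then show ?thesis using k stab_kernel_trivial by simp
  next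
    case 2
    then interpret cubic_cycle_quotient_no_inner_edges V E G N \<alpha>
      by (intro cubic_cycle_quotient_no_inner_edges.intro base cubic_cycle_quotient_no_inner_edges_axioms.intro)
    show ?thesis
      using even_card_orbits stab_eq_stab_kernel stab_elementary_abelian card_stab_le assms(13) by simp
  qed
qed

end
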